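(* Let $P\in S^n$. Then: (1) $\overline{\mathcal{H}_{\rm Wulff}(S^n,P)}\subset\mathcal{H}^\circ(S^n)$; (2) $\bigcirc(\mathcal{H}_{\rm Wulff}(S^n,P))=\mathcal{H}_{\rm Wulff}(S^n,P)$; (3) $\bigcirc(\overline{\mathcal{H}_{\rm Wulff}(S^n,P)})=\overline{\mathcal{H}_{\rm Wulff}(S^n,P)}$; (4) the restriction of $\bigcirc$ to $\overline{\mathcal{H}_{\rm Wulff}(S^n,P)}$ is injective. Here $\bigcirc(W)=W^\circ$.
   Context: $S^n$ is the unit sphere in $\mathbb{R}^{n+1}$, $n\ge1$; $|PQ|=\arccos(P\cdot Q)$. $H(P)=\{Q\in S^n:P\cdot Q\ge0\}$ and $W^\circ=\bigcap_{P\in W}H(P)$. $\mathcal{H}(S^n)$ is the set of non-empty closed subsets of $S^n$ with the Pompeiu-Hausdorff metric $h(A,B)=\max\{\max_{x\in A}\min_{y\in B}|xy|,\ \max_{y\in B}\min_{x\in A}|xy|\}$, and $\mathcal{H}^\circ(S^n)=\{W\in\mathcal{H}(S^n):W^\circ\ne\emptyset\}$. A subset is hemispherical if it is disjoint from $H(Q)$ for some $Q\in S^n$. For $A,B$ in a hemispherical set, the arc $AB=\{((1-t)A+tB)/\|(1-t)A+tB\|:0\le t\le1\}$; a hemispherical set $W$ is spherical convex if $AB\subset W$ for all $A,B\in W$, and a spherical convex body if moreover it is closed and has an interior point. $\mathcal{H}_{\rm Wulff}(S^n,P)$ is the set of $W\in\mathcal{H}(S^n)$ with $W\cap H(-P)=\emptyset$,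 $P$ an interior point of $W$, and $W$ a spherical convex body; $\overline{\mathcal{H}_{\rm Wulff}(S^n,P)}$ is its closure in $(\mathcal{H}(S^n),h)$. *)

theory Defs
  imports "HOL-Analysis.Analysis"
begin

text \<open>The unit sphere S^n in R^(n+1), modelled as the unit sphere of a Euclidean space 'a
  with DIM('a) = n+1.\<close>
definition sph :: "'a::euclidean_space set" where
  "sph = sphere 0 1"

definition sdist :: "'a::euclidean_space \<Rightarrow> 'a \<Rightarrow> real" where
  "sdist P Q = arccos (P \<bullet> Q)"

definition hemi :: "'a::euclidean_space \<Rightarrow> 'a set" where
  "hemi P = {Q \<in> sph. P \<bullet> Q \<ge> 0}"

definition spolar :: "'a::euclidean_space set \<Rightarrow> 'a set" where
  "spolar W = {Q \<in> sph. \<forall>P\<in>W. P \<bullet> Q \<ge> 0}"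

definition Hsets :: "'a::euclidean_space set set" where
  "Hsets = {W. W \<subseteq> sph \<and> W \<noteq> {} \<and> closed W}"

definition shd :: "'a::euclidean_space set \<Rightarrow> 'a set \<Rightarrow> real" where
  "shd A B = max (SUP x\<in>A. INF y\<in>B. sdist x y) (SUP y\<in>B. INF x\<in>A. sdist x y)"

definition Hcirc :: "'a::euclidean_space set set" where
  "Hcirc = {W \<in> Hsets. spolar W \<noteq> {}}"

definition hemispherical :: "'a::euclidean_space set \<Rightarrow> bool" where
  "hemispherical W \<longleftrightarrow> (\<exists>Q\<in>sph. W \<inter> hemi Q = {})"

definition sarc :: "'a::euclidean_space \<Rightarrow> 'a \<Rightarrow> 'a set" where
  "sarc A B = {((1 - t) *\<^sub>R A + t *\<^sub>R B) /\<^sub>R norm ((1 - t) *\<^sub>R A + t *\<^sub>R B) | t. 0 \<le> t \<and> t \<le> 1}"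

definition spherical_convex :: "'a::euclidean_space set \<Rightarrow> bool" where
  "spherical_convex W \<longleftrightarrow> W \<subseteq> sph \<and> hemispherical W \<and> (\<forall>A\<in>W. \<forall>B\<in>W. sarc A B \<subseteq> W)"

definition sinterior_point :: "'a::euclidean_space set \<Rightarrow> 'a \<Rightarrow> bool" where
  "sinterior_point W x \<longleftrightarrow> x \<in> W \<and> (\<exists>e>0. sph \<inter> ball x e \<subseteq> W)"

definition spherical_convex_body :: "'a::euclidean_space set \<Rightarrow> bool" where
  "spherical_convex_body W \<longleftrightarrow> spherical_convex W \<and> closed W \<and> (\<exists>x. sinterior_point W x)"

definition HWulff :: "'a::euclidean_space \<Rightarrow> 'a set set" where
  "HWulff P = {W \<in> Hsets. W \<inter> hemi (- P) = {} \<and> sinterior_point W P \<and> spherical_convex_body W}"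

definition HWulff_cl :: "'a::euclidean_space \<Rightarrow> 'a set set" where
  "HWulff_cl P = {W \<in> Hsets. \<forall>e>0. \<exists>V\<in>HWulff P. shd W V < e}"

end

theory Submission
  imports Defs
begin

text \<open>The closure of \<open>H_Wulff(S^n, P)\<close> consists exactly of the traces \<open>S^n \<inter> K\<close> of closed convex
  cones \<open>K\<close> with \<open>P \<in> K \<subseteq> {x. P \<bullet> x \<ge> 0}\<close>: such traces are stable under Hausdorff limits, and each
  of them is the limit of the traces of the thickened cones \<open>{x. d(x, K) \<le> \<beta> P \<bullet> x, \<beta> |x| \<le> 2 P \<bullet> x}\<close>,
  which are Wulff shapes. The polar of such a trace is the trace of the dual cone, and the bipolar
  theorem for closed convex cones makes polarity an involution of this class. On Wulff shapes the
  polar exchanges "\<open>P\<close> is an interior point" with "\<open>P \<bullet> w > 0\<close> on \<open>W\<close>", so it preserves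
  \<open>H_Wulff(S^n, P)\<close> as well.\<close>

section \<open>Spherical and chordal distance\<close>

lemma sph_iff: "x \<in> sph \<longleftrightarrow> norm x = 1"
  by (simp add: sph_def)

lemma sgn_in_sph: "(x::'a::euclidean_space) \<noteq> 0 \<Longrightarrow> sgn x \<in> sph"
  by (simp add: sph_iff norm_sgn)

lemma closed_sph: "closed (sph::'a::euclidean_space set)"
  by (simp add: sph_def)

lemma abs_inner_sph_le_norm: "P \<in> sph \<Longrightarrow> \<bar>P \<bullet> u\<bar> \<le> norm u"
  using Cauchy_Schwarz_ineq2[of P u] by (simp add: sph_iff)

lemma norm_diff_sph_squared:
  assumes "x \<in> sph" "y \<in> sph"
  shows "(norm (x - y))\<^sup>2 = 2 - 2 * (x \<bullet> y)"
proof -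
  have "x \<bullet> x = 1" "y \<bullet> y = 1"
    using assms by (simp_all add: sph_iff norm_eq_1)
  then show ?thesis
    by (simp add: power2_norm_eq_inner inner_diff inner_commute)
qed

lemma abs_inner_sph_le_1: "x \<in> sph \<Longrightarrow> y \<in> sph \<Longrightarrow> \<bar>x \<bullet> y\<bar> \<le> 1"
  using abs_inner_sph_le_norm[of x y] by (simp add: sph_iff)

lemma sdist_commute: "sdist x y = sdist y x"
  by (simp add: sdist_def inner_commute)

lemma sdist_nonneg: "x \<in> sph \<Longrightarrow> y \<in> sph \<Longrightarrow> 0 \<le> sdist x y"
  using abs_inner_sph_le_1[of x y] by (simp add: sdist_def arccos_lbound abs_le_iff)

lemma sdist_le_pi: "x \<in> sph \<Longrightarrow> y \<in> sph \<Longrightarrow> sdist x y \<le> pi"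
  using abs_inner_sph_le_1[of x y] by (simp add: sdist_def arccos_ubound abs_le_iff)

text \<open>\<open>|x - y|\<^sup>2 = 2 - 2 cos \<theta> = 4 sin\<^sup>2 (\<theta>/2) \<le> \<theta>\<^sup>2\<close>.\<close>
lemma norm_diff_le_sdist:
  assumes x: "x \<in> sph" and y: "y \<in> sph"
  shows "norm (x - y) \<le> sdist x y"
proof -
  define \<theta> where "\<theta> = sdist x y"
  have "cos \<theta> = x \<bullet> y"
    using abs_inner_sph_le_1[OF x y] by (simp add: \<theta>_def sdist_def cos_arccos_abs)
  then have "(norm (x - y))\<^sup>2 = 2 - 2 * cos (2 * (\<theta> / 2))"
    using norm_diff_sph_squared[OF x y] by simp
  also have "\<dots> = 4 * (sin (\<theta> / 2))\<^sup>2"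
    by (simp only: cos_double_sin) simp
  also have "\<dots> \<le> 4 * (\<theta> / 2)\<^sup>2"
    using abs_sin_x_le_abs_x[of "\<theta> / 2"] unfolding abs_le_square_iff by simp
  also have "\<dots> = \<theta>\<^sup>2"
    by (simp add: power2_eq_square)
  finally show ?thesis
    using sdist_nonneg[OF x y] unfolding \<theta>_def by (rule power2_le_imp_le)
qed

lemma sdist_less_if_norm_diff_small:
  assumes "e > 0"
  obtains d where "d > 0"
    "\<And>x y::'a::euclidean_space. x \<in> sph \<Longrightarrow> y \<in> sph \<Longrightarrow> norm (x - y) < d \<Longrightarrow> sdist x y < e"
proof -
  obtain d' where d': "d' > 0"
    "\<And>t. t \<in> {-1..1} \<Longrightarrow> dist t 1 < d' \<Longrightarrow> dist (arccos t) (arccos 1) < e"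
    using continuous_on_arccos'[unfolded continuous_on_iff, rule_format, of 1 e] assms by auto
  show ?thesis
  proof (rule that[of "min 1 d'"])
    show "min 1 d' > 0" using d' by simp
    fix x y :: 'a assume x: "x \<in> sph" and y: "y \<in> sph" and xy: "norm (x - y) < min 1 d'"
    have "(norm (x - y))\<^sup>2 \<le> norm (x - y)"
      using xy by (simp add: power2_eq_square mult_left_le)
    then have "dist (x \<bullet> y) 1 < d'"
      using norm_diff_sph_squared[OF x y] xy abs_inner_sph_le_1[OF x y] by (simp add: dist_real_def)
    then show "sdist x y < e"
      using d'(2)[of "x \<bullet> y"] abs_inner_sph_le_1[OF x y] by (simp add: sdist_def dist_real_def abs_le_iff)
  qed
qed

lemma norm_sgn_diff_le:
  fixes x y :: "'a::real_normed_vector"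
  assumes "x \<noteq> 0"
  shows "norm (sgn x - sgn y) \<le> 2 * norm (x - y) / norm x"
proof (cases "y = 0")
  case True
  then show ?thesis using assms by (simp add: norm_sgn)
next
  case False
  have nx: "norm x > 0" and ny: "norm y > 0" using assms False by simp_all
  define c where "c = (norm y - norm x) / (norm x * norm y)"
  have "inverse (norm x) - c = inverse (norm y)"
    using nx ny by (simp add: c_def field_simps)
  then have "sgn x - sgn y = (x - y) /\<^sub>R norm x + c *\<^sub>R y"
    by (simp add: sgn_div_norm scaleR_diff_right algebra_simps)
  then have "norm (sgn x - sgn y) \<le> norm ((x - y) /\<^sub>R norm x) + norm (c *\<^sub>R y)"
    by (metis norm_triangle_ineq)
  also have "norm ((x - y) /\<^sub>R norm x) = norm (x - y) / norm x"
    by (simp add: divide_inverse_commute)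
  also have "norm (c *\<^sub>R y) = \<bar>norm y - norm x\<bar> / norm x"
    using nx ny by (simp add: c_def abs_mult)
  also have "\<bar>norm y - norm x\<bar> \<le> norm (x - y)"
    by (metis abs_minus_commute norm_triangle_ineq3)
  finally show ?thesis
    using nx by (simp add: divide_right_mono add_divide_distrib[symmetric])
qed

lemma SUP_INF_sdist_less:
  assumes A: "A \<subseteq> sph" and B: "B \<subseteq> sph" "B \<noteq> {}" and x: "x \<in> A"
    and less: "(SUP x\<in>A. INF y\<in>B. sdist x y) < e"
  shows "\<exists>y\<in>B. sdist x y < e"
proof -
  obtain y0 where y0: "y0 \<in> B" using B by blast
  have below: "bdd_below ((\<lambda>y. sdist z y) ` B)" if "z \<in> A" for z
    using that A B sdist_nonneg by (intro bdd_belowI[of _ 0]) blast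
  have above: "bdd_above ((\<lambda>z. INF y\<in>B. sdist z y) ` A)"
  proof (rule bdd_aboveI[of _ pi], clarify)
    fix z assume z: "z \<in> A"
    have "(INF y\<in>B. sdist z y) \<le> sdist z y0" by (rule cINF_lower[OF below[OF z] y0])
    also have "\<dots> \<le> pi" using A B z y0 sdist_le_pi by blast
    finally show "(INF y\<in>B. sdist z y) \<le> pi" .
  qed
  have "(INF y\<in>B. sdist x y) \<le> (SUP x\<in>A. INF y\<in>B. sdist x y)"
    by (rule cSUP_upper[OF x above])
  then have "(INF y\<in>B. sdist x y) < e"
    using less by linarith
  then show ?thesis
    using cINF_less_iff[OF B(2) below[OF x]] by blast
qed

lemma SUP_INF_sdist_le:
  assumes A: "A \<subseteq> sph" "A \<noteq> {}" and B: "B \<subseteq> sph"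
    and near: "\<And>x. x \<in> A \<Longrightarrow> \<exists>y\<in>B. sdist x y \<le> d"
  shows "(SUP x\<in>A. INF y\<in>B. sdist x y) \<le> d"
proof (rule cSUP_least[OF A(2)])
  fix x assume x: "x \<in> A"
  then obtain y where y: "y \<in> B" "sdist x y \<le> d" using near by blast
  have "bdd_below ((\<lambda>y. sdist x y) ` B)"
    using x A B sdist_nonneg by (intro bdd_belowI[of _ 0]) blast
  then show "(INF y\<in>B. sdist x y) \<le> d"
    using y by (rule cINF_lower2)
qed

lemma shd_sym_def: "shd A B = max (SUP x\<in>A. INF y\<in>B. sdist x y) (SUP y\<in>B. INF x\<in>A. sdist y x)"
  by (simp add: shd_def sdist_commute)

lemma shd_less_imp_close:
  assumes A: "A \<subseteq> sph" "A \<noteq> {}" and B: "B \<subseteq> sph" "B \<noteq> {}" and less: "shd A B < d"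
  shows "(\<forall>x\<in>A. \<exists>y\<in>B. dist x y < d) \<and> (\<forall>y\<in>B. \<exists>x\<in>A. dist y x < d)"
proof -
  have close: "\<exists>y\<in>Y. dist x y < d"
    if XY: "X \<subseteq> sph" "Y \<subseteq> sph" "Y \<noteq> {}" and x: "x \<in> X"
      and less_XY: "(SUP x\<in>X. INF y\<in>Y. sdist x y) < d" for X Y and x :: 'a
  proof -
    obtain y where y: "y \<in> Y" "sdist x y < d"
      using SUP_INF_sdist_less[OF XY x less_XY] by blast
    have "dist x y \<le> sdist x y"
      using norm_diff_le_sdist XY x y(1) by (auto simp: dist_norm)
    then show ?thesis using y by force
  qed
  have "(SUP x\<in>A. INF y\<in>B. sdist x y) < d" "(SUP y\<in>B. INF x\<in>A. sdist y x) < d"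
    using less by (simp_all add: shd_sym_def)
  then show ?thesis
    using close[OF A(1) B] close[OF B(1) A] by blast
qed

lemma shd_less_if_close:
  assumes "e > 0"
  obtains d where "d > 0" and
    "\<And>A B :: 'a::euclidean_space set. A \<subseteq> sph \<Longrightarrow> A \<noteq> {} \<Longrightarrow> B \<subseteq> sph \<Longrightarrow> B \<noteq> {} \<Longrightarrow>
      (\<forall>x\<in>A. \<exists>y\<in>B. dist x y < d) \<Longrightarrow> (\<forall>y\<in>B. \<exists>x\<in>A. dist y x < d) \<Longrightarrow> shd A B < e"
proof -
  obtain d where "d > 0" and d: "\<And>x y :: 'a. x \<in> sph \<Longrightarrow> y \<in> sph \<Longrightarrow> norm (x - y) < d \<Longrightarrow> sdist x y < e / 2"
    using sdist_less_if_norm_diff_small[of "e / 2"] assms by (metis half_gt_zero)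
  have half: "(SUP x\<in>X. INF y\<in>Y. sdist x y) \<le> e / 2"
    if XY: "X \<subseteq> sph" "X \<noteq> {}" "Y \<subseteq> sph" and near: "\<forall>x\<in>X. \<exists>y\<in>Y. dist x y < d" for X Y :: "'a set"
  proof (rule SUP_INF_sdist_le[OF XY])
    fix x assume x: "x \<in> X"
    then obtain y where "y \<in> Y" "norm (x - y) < d" using near by (auto simp: dist_norm)
    then show "\<exists>y\<in>Y. sdist x y \<le> e / 2"
      using d[of x y] XY x by force
  qed
  show ?thesis
  proof (rule that[OF \<open>d > 0\<close>])
    fix A B :: "'a set"
    assume "A \<subseteq> sph" "A \<noteq> {}" "B \<subseteq> sph" "B \<noteq> {}"
      and "\<forall>x\<in>A. \<exists>y\<in>B. dist x y < d" "\<forall>y\<in>B. \<exists>x\<in>A. dist y x < d"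
    then have "(SUP x\<in>A. INF y\<in>B. sdist x y) \<le> e / 2" "(SUP y\<in>B. INF x\<in>A. sdist y x) \<le> e / 2"
      using half by blast+
    then show "shd A B < e"
      using assms by (simp add: shd_sym_def)
  qed
qed

lemma HWulff_cl_iff_close:
  fixes W :: "'a::euclidean_space set"
  shows "W \<in> HWulff_cl P \<longleftrightarrow> W \<in> Hsets \<and>
    (\<forall>d>0. \<exists>V\<in>HWulff P. (\<forall>x\<in>W. \<exists>y\<in>V. dist x y < d) \<and> (\<forall>y\<in>V. \<exists>x\<in>W. dist y x < d))"
proof (intro iffI conjI allI impI)
  assume W: "W \<in> HWulff_cl P"
  then show "W \<in> Hsets" by (simp add: HWulff_cl_def)
  fix d :: real assume "d > 0"
  then obtain V where V: "V \<in> HWulff P" "shd W V < d"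
    using W by (auto simp: HWulff_cl_def)
  moreover have "W \<subseteq> sph" "W \<noteq> {}" "V \<subseteq> sph" "V \<noteq> {}"
    using W V(1) by (auto simp: HWulff_cl_def HWulff_def Hsets_def)
  ultimately show "\<exists>V\<in>HWulff P. (\<forall>x\<in>W. \<exists>y\<in>V. dist x y < d) \<and> (\<forall>y\<in>V. \<exists>x\<in>W. dist y x < d)"
    using shd_less_imp_close by blast
next
  assume W: "W \<in> Hsets \<and>
    (\<forall>d>0. \<exists>V\<in>HWulff P. (\<forall>x\<in>W. \<exists>y\<in>V. dist x y < d) \<and> (\<forall>y\<in>V. \<exists>x\<in>W. dist y x < d))"
  show "W \<in> HWulff_cl P"
    unfolding HWulff_cl_def
  proof (intro CollectI conjI allI impI)
    show "W \<in> Hsets" using W by blast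
    fix e :: real assume "e > 0"
    then obtain d where "d > 0" and d: "\<And>A B :: 'a set. A \<subseteq> sph \<Longrightarrow> A \<noteq> {} \<Longrightarrow> B \<subseteq> sph \<Longrightarrow> B \<noteq> {} \<Longrightarrow>
      (\<forall>x\<in>A. \<exists>y\<in>B. dist x y < d) \<Longrightarrow> (\<forall>y\<in>B. \<exists>x\<in>A. dist y x < d) \<Longrightarrow> shd A B < e"
      by (rule shd_less_if_close) blast
    then obtain V where "V \<in> HWulff P" "\<forall>x\<in>W. \<exists>y\<in>V. dist x y < d" "\<forall>y\<in>V. \<exists>x\<in>W. dist y x < d"
      using W by blast
    moreover have "W \<subseteq> sph" "W \<noteq> {}" "V \<subseteq> sph" "V \<noteq> {}"
      using W \<open>V \<in> HWulff P\<close> by (auto simp: HWulff_def Hsets_def)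
    ultimately show "\<exists>V\<in>HWulff P. shd W V < e"
      using d by blast
  qed
qed

section \<open>Traces of closed convex cones\<close>

text \<open>The trace on the sphere of a closed convex cone that contains \<open>P\<close> and lies in the half-space
  \<open>P \<bullet> x \<ge> 0\<close>, described by its closure under normalized nonnegative combinations.\<close>
definition cone_section :: "'a::euclidean_space \<Rightarrow> 'a set \<Rightarrow> bool" where
  "cone_section P W \<longleftrightarrow> closed W \<and> P \<in> W \<and> W \<subseteq> hemi P \<and>
     (\<forall>a\<in>W. \<forall>b\<in>W. \<forall>s\<ge>0. \<forall>t\<ge>0. s *\<^sub>R a + t *\<^sub>R b \<noteq> 0 \<longrightarrow> sgn (s *\<^sub>R a + t *\<^sub>R b) \<in> W)"

lemma cone_section_subset_sph: "cone_section P W \<Longrightarrow> W \<subseteq> sph"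
  by (auto simp: cone_section_def hemi_def)

lemma cone_section_inner_nonneg: "cone_section P W \<Longrightarrow> w \<in> W \<Longrightarrow> 0 \<le> P \<bullet> w"
  by (auto simp: cone_section_def hemi_def)

lemma cone_section_sgn:
  "cone_section P W \<Longrightarrow> a \<in> W \<Longrightarrow> b \<in> W \<Longrightarrow> 0 \<le> s \<Longrightarrow> 0 \<le> t \<Longrightarrow> s *\<^sub>R a + t *\<^sub>R b \<noteq> 0
    \<Longrightarrow> sgn (s *\<^sub>R a + t *\<^sub>R b) \<in> W"
  by (simp add: cone_section_def)

lemma cone_section_sph_Int:
  assumes C: "convex_cone C" "closed C" and P: "P \<in> sph" "P \<in> C"
    and nonneg: "\<And>x. x \<in> C \<Longrightarrow> 0 \<le> P \<bullet> x"
  shows "cone_section P (sph \<inter> C)"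
  unfolding cone_section_def
proof (intro conjI ballI allI impI)
  show "closed (sph \<inter> C)" using C closed_sph by blast
  show "P \<in> sph \<inter> C" using P by blast
  show "sph \<inter> C \<subseteq> hemi P" using nonneg by (auto simp: hemi_def)
  fix a b and s t :: real
  assume "a \<in> sph \<inter> C" "b \<in> sph \<inter> C" "0 \<le> s" "0 \<le> t" and nz: "s *\<^sub>R a + t *\<^sub>R b \<noteq> 0"
  then have "s *\<^sub>R a + t *\<^sub>R b \<in> C"
    using C(1) by (simp add: convex_cone_add convex_cone_scaleR)
  then have "sgn (s *\<^sub>R a + t *\<^sub>R b) \<in> C"
    using C(1) by (simp add: sgn_div_norm convex_cone_scaleR)
  then show "sgn (s *\<^sub>R a + t *\<^sub>R b) \<in> sph \<inter> C"
    using sgn_in_sph[OF nz] by blast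
qed

lemma convex_cone_conic_hull_cone_section:
  assumes W: "cone_section P W"
  shows "convex_cone (conic hull W)"
  unfolding convex_cone_iff
proof (intro conjI ballI allI impI)
  have "P \<in> conic hull W"
    using W hull_subset by (force simp: cone_section_def)
  then show "0 \<in> conic hull W"
    using conic_mul[OF conic_conic_hull, of P W 0] by simp
  show "c *\<^sub>R x \<in> conic hull W" if "x \<in> conic hull W" "0 \<le> c" for x and c :: real
    using that conic_conic_hull conic_mul by blast
  fix x y assume "x \<in> conic hull W" "y \<in> conic hull W"
  then obtain c a d b where x: "x = c *\<^sub>R a" "0 \<le> c" "a \<in> W" and y: "y = d *\<^sub>R b" "0 \<le> d" "b \<in> W"
    by (auto simp: conic_hull_explicit)
  show "x + y \<in> conic hull W"
  proof (cases "x + y = 0")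
    case True
    then show ?thesis using \<open>0 \<in> conic hull W\<close> by simp
  next
    case False
    then have "sgn (x + y) \<in> W"
      using cone_section_sgn[OF W x(3) y(3) x(2) y(2)] x(1) y(1) by simp
    then have "norm (x + y) *\<^sub>R sgn (x + y) \<in> conic hull W"
      using conic_mul[OF conic_conic_hull hull_inc] norm_ge_zero by blast
    then show ?thesis by (simp add: sgn_div_norm False)
  qed
qed

lemma compact_cone_section: "cone_section P W \<Longrightarrow> compact W"
  using bounded_subset[OF bounded_sphere cone_section_subset_sph[unfolded sph_def]]
  by (simp add: cone_section_def compact_eq_bounded_closed)

lemma closed_conic_hull_cone_section:
  assumes "cone_section P W"
  shows "closed (conic hull W)"
proof (rule closed_conic_hull)
  have "compact W"
    using assms by (rule compact_cone_section)
  moreover have "0 \<notin> W"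
    using cone_section_subset_sph[OF assms] by (auto simp: sph_iff)
  ultimately show "0 \<in> rel_interior W \<or> compact W \<and> 0 \<notin> W" by blast
qed

lemma sph_Int_conic_hull_cone_section:
  assumes W: "cone_section P W"
  shows "sph \<inter> conic hull W = W"
proof (intro equalityI subsetI)
  fix y assume "y \<in> sph \<inter> conic hull W"
  then obtain c w where y: "y \<in> sph" "y = c *\<^sub>R w" "0 \<le> c" "w \<in> W"
    by (auto simp: conic_hull_explicit)
  have "norm w = 1" using y(4) cone_section_subset_sph[OF W] by (auto simp: sph_iff)
  then have "c = 1" using y by (simp add: sph_iff)
  then show "y \<in> W" using y by simp
qed (use cone_section_subset_sph[OF W] in \<open>auto simp: hull_inc\<close>)

lemma cone_section_spolar:
  assumes W: "cone_section P W"
  shows "cone_section P (spolar W)"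
proof -
  define C where "C = {y. \<forall>w\<in>W. 0 \<le> w \<bullet> y}"
  have P: "P \<in> W" "P \<in> sph"
    using W cone_section_subset_sph[OF W] by (auto simp: cone_section_def)
  have "spolar W = sph \<inter> C" by (auto simp: spolar_def C_def)
  also have "cone_section P (sph \<inter> C)"
  proof (rule cone_section_sph_Int)
    show "convex_cone C"
      by (auto simp: C_def convex_cone_iff inner_add_right)
    show "closed C"
      unfolding C_def Collect_ball_eq by (intro closed_INT ballI closed_halfspace_ge)
    show "P \<in> C"
      using cone_section_inner_nonneg[OF W] by (simp add: C_def inner_commute)
    show "0 \<le> P \<bullet> x" if "x \<in> C" for x
      using that P(1) by (simp add: C_def)
  qed (rule P(2))
  finally show ?thesis .
qed

text \<open>Bipolarity: a point outside the closed convex cone spanned by \<open>W\<close> is separated from it by a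
  hyperplane through the origin, whose normal lies in the polar.\<close>
lemma spolar_spolar:
  assumes W: "cone_section P W"
  shows "spolar (spolar W) = W"
proof (intro equalityI subsetI)
  show "w \<in> spolar (spolar W)" if "w \<in> W" for w
    using that cone_section_subset_sph[OF W] by (auto simp: spolar_def inner_commute)
next
  fix y assume y: "y \<in> spolar (spolar W)"
  show "y \<in> W"
  proof (rule ccontr)
    assume "y \<notin> W"
    then have "y \<notin> conic hull W"
      using y sph_Int_conic_hull_cone_section[OF W] by (auto simp: spolar_def)
    moreover have "convex (conic hull W)"
      using convex_cone_conic_hull_cone_section[OF W] by (simp add: convex_cone_def)
    ultimately obtain a b where ay: "a \<bullet> y < b" and aK: "\<And>x. x \<in> conic hull W \<Longrightarrow> b < a \<bullet> x"
      using separating_hyperplane_closed_point[OF _ closed_conic_hull_cone_section[OF W]] by meson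
    have "b < 0"
      using aK[OF convex_cone_contains_0[OF convex_cone_conic_hull_cone_section[OF W]]] by simp
    have aW: "0 \<le> a \<bullet> w" if w: "w \<in> W" for w
    proof (rule ccontr)
      assume "\<not> 0 \<le> a \<bullet> w"
      then have "0 \<le> b / (a \<bullet> w)"
        using \<open>b < 0\<close> by (simp add: divide_nonpos_neg)
      then have "(b / (a \<bullet> w)) *\<^sub>R w \<in> conic hull W"
        using w conic_mul[OF conic_conic_hull hull_inc] by blast
      then have "b < (b / (a \<bullet> w)) * (a \<bullet> w)"
        using aK by fastforce
      then show False
        using \<open>\<not> 0 \<le> a \<bullet> w\<close> by simp
    qed
    have "a \<noteq> 0" using ay \<open>b < 0\<close> by auto
    then have "sgn a \<in> spolar W"
      using aW sgn_in_sph by (simp add: spolar_def inner_commute sgn_div_norm)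
    then have "0 \<le> sgn a \<bullet> y" using y by (auto simp: spolar_def)
    moreover have "a \<bullet> y < 0" using ay \<open>b < 0\<close> by linarith
    moreover have "0 < inverse (norm a)"
      using \<open>a \<noteq> 0\<close> by simp
    ultimately show False
      using mult_pos_neg[of "inverse (norm a)" "a \<bullet> y"] by (simp add: sgn_div_norm)
  qed
qed

lemma dist_scaleR_add_le:
  fixes a b a' b' :: "'a::real_normed_vector"
  assumes "0 \<le> s" "0 \<le> t"
  shows "dist (s *\<^sub>R a + t *\<^sub>R b) (s *\<^sub>R a' + t *\<^sub>R b') \<le> s * dist a a' + t * dist b b'"
proof -
  have "dist (s *\<^sub>R a + t *\<^sub>R b) (s *\<^sub>R a' + t *\<^sub>R b') = norm (s *\<^sub>R (a - a') + t *\<^sub>R (b - b'))"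
    by (simp add: dist_norm algebra_simps)
  also have "\<dots> \<le> norm (s *\<^sub>R (a - a')) + norm (t *\<^sub>R (b - b'))"
    by (rule norm_triangle_ineq)
  finally show ?thesis
    using assms by (simp add: dist_norm)
qed

lemma sgn_combination_mem_limit:
  assumes W: "closed W" and ab: "a \<in> W" "b \<in> W" and st: "0 \<le> s" "0 \<le> t"
    and nz: "s *\<^sub>R a + t *\<^sub>R b \<noteq> 0"
    and approx: "\<And>d. d > 0 \<Longrightarrow>
      \<exists>V. cone_section P V \<and> (\<forall>x\<in>W. \<exists>y\<in>V. dist x y < d) \<and> (\<forall>y\<in>V. \<exists>x\<in>W. dist y x < d)"
  shows "sgn (s *\<^sub>R a + t *\<^sub>R b) \<in> W"
  unfolding closed_approachable[OF W, symmetric]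
proof (intro allI impI)
  define z where "z = s *\<^sub>R a + t *\<^sub>R b"
  fix \<eta> :: real assume "\<eta> > 0"
  have "isCont sgn z"
    using isCont_sgn[OF continuous_ident, of z] nz by (simp add: z_def)
  moreover have "\<eta> / 2 > 0" using \<open>\<eta> > 0\<close> by simp
  ultimately obtain \<delta> where "\<delta> > 0" and \<delta>: "\<And>z'. dist z' z < \<delta> \<Longrightarrow> dist (sgn z') (sgn z) < \<eta> / 2"
    unfolding continuous_at_eps_delta by blast
  define \<rho> where "\<rho> = min \<delta> (norm z)"
  have "\<rho> > 0" using \<open>\<delta> > 0\<close> nz by (simp add: \<rho>_def z_def)
  define d where "d = min (\<eta> / 2) (\<rho> / (s + t + 1))"
  have "d > 0" using \<open>\<eta> > 0\<close> \<open>\<rho> > 0\<close> st by (simp add: d_def)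
  then obtain V where V: "cone_section P V" "\<forall>x\<in>W. \<exists>y\<in>V. dist x y < d" "\<forall>y\<in>V. \<exists>x\<in>W. dist y x < d"
    using approx by blast
  then obtain a' b' where a': "a' \<in> V" "dist a a' < d" and b': "b' \<in> V" "dist b b' < d"
    using ab by blast
  define z' where "z' = s *\<^sub>R a' + t *\<^sub>R b'"
  have "dist z' z \<le> s * dist a a' + t * dist b b'"
    unfolding z_def z'_def using dist_scaleR_add_le[OF st] by (simp add: dist_commute)
  also have "\<dots> \<le> s * d + t * d"
    using st a'(2) b'(2) by (intro add_mono mult_left_mono) auto
  also have "\<dots> < \<rho>"
  proof -
    have "(s + t) * d \<le> (s + t) * (\<rho> / (s + t + 1))"
      using st by (intro mult_left_mono) (auto simp: d_def)
    also have "\<dots> < \<rho>"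
      using st \<open>\<rho> > 0\<close> by (simp add: field_simps)
    finally show ?thesis by (simp add: distrib_right)
  qed
  finally have "dist z' z < \<rho>" .
  then have "z' \<noteq> 0" and "dist (sgn z') (sgn z) < \<eta> / 2"
    using \<delta> by (auto simp: \<rho>_def)
  moreover have "sgn z' \<in> V"
    using cone_section_sgn[OF V(1) a'(1) b'(1) st] \<open>z' \<noteq> 0\<close> by (simp add: z'_def)
  then obtain w where "w \<in> W" "dist (sgn z') w < d"
    using V(3) by blast
  moreover have "dist w (sgn z) \<le> dist (sgn z') w + dist (sgn z') (sgn z)"
    by (rule dist_triangle3)
  moreover have "d \<le> \<eta> / 2" unfolding d_def by (rule min.cobounded1)
  ultimately have "dist w (sgn z) < \<eta>" by linarith
  then show "\<exists>w\<in>W. dist w (sgn z) < \<eta>" using \<open>w \<in> W\<close> by blast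
qed

lemma cone_section_limit:
  assumes W: "closed W" "W \<subseteq> sph"
    and approx: "\<And>d. d > 0 \<Longrightarrow>
      \<exists>V. cone_section P V \<and> (\<forall>x\<in>W. \<exists>y\<in>V. dist x y < d) \<and> (\<forall>y\<in>V. \<exists>x\<in>W. dist y x < d)"
  shows "cone_section P W"
  unfolding cone_section_def
proof (intro conjI ballI allI impI)
  show "closed W" by (rule W(1))
  obtain V0 where "cone_section P V0" using approx[of 1] by auto
  then have P: "P \<in> sph"
    using cone_section_subset_sph by (auto simp: cone_section_def)
  show "P \<in> W"
    unfolding closed_approachable[OF W(1), symmetric]
  proof (intro allI impI)
    fix e :: real assume "e > 0"
    then obtain V where "cone_section P V" "\<forall>y\<in>V. \<exists>x\<in>W. dist y x < e"
      using approx by blast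
    then show "\<exists>x\<in>W. dist x P < e"
      by (force simp: cone_section_def dist_commute)
  qed
  have "0 \<le> P \<bullet> w" if w: "w \<in> W" for w
  proof (rule ccontr)
    assume "\<not> 0 \<le> P \<bullet> w"
    then obtain V where V: "cone_section P V" "\<forall>x\<in>W. \<exists>y\<in>V. dist x y < - (P \<bullet> w)"
      using approx[of "- (P \<bullet> w)"] by auto
    then obtain v where v: "v \<in> V" "dist w v < - (P \<bullet> w)"
      using w by blast
    have "0 \<le> P \<bullet> v" by (rule cone_section_inner_nonneg[OF V(1) v(1)])
    moreover have "\<bar>P \<bullet> (w - v)\<bar> \<le> dist w v"
      using abs_inner_sph_le_norm[OF P] by (simp add: dist_norm)
    ultimately show False
      using v(2) by (simp add: inner_diff_right)
  qed
  then show "W \<subseteq> hemi P" using W(2) by (auto simp: hemi_def)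
  fix a b and s t :: real
  assume "a \<in> W" "b \<in> W" "0 \<le> s" "0 \<le> t" "s *\<^sub>R a + t *\<^sub>R b \<noteq> 0"
  then show "sgn (s *\<^sub>R a + t *\<^sub>R b) \<in> W"
    using sgn_combination_mem_limit[OF W(1), where P = P] approx by blast
qed

section \<open>Wulff shapes and their polars\<close>

lemma sarc_eq_sgn: "sarc A B = {sgn ((1 - t) *\<^sub>R A + t *\<^sub>R B) | t. 0 \<le> t \<and> t \<le> 1}"
  by (simp add: sarc_def sgn_div_norm)

lemma sgn_combination_in_sarc:
  assumes st: "0 \<le> s" "0 \<le> t" and nz: "s *\<^sub>R a + t *\<^sub>R b \<noteq> 0"
  shows "sgn (s *\<^sub>R a + t *\<^sub>R b) \<in> sarc a b"
proof -
  have "s + t > 0"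
    using st nz by (cases "s = 0"; cases "t = 0") auto
  define \<tau> where "\<tau> = t / (s + t)"
  have \<tau>: "0 \<le> \<tau>" "\<tau> \<le> 1" and "1 - \<tau> = s / (s + t)"
    using st \<open>s + t > 0\<close> by (auto simp: \<tau>_def field_simps)
  then have "s *\<^sub>R a + t *\<^sub>R b = (s + t) *\<^sub>R ((1 - \<tau>) *\<^sub>R a + \<tau> *\<^sub>R b)"
    using \<open>s + t > 0\<close> by (simp add: \<tau>_def scaleR_add_right)
  then have "sgn (s *\<^sub>R a + t *\<^sub>R b) = sgn ((1 - \<tau>) *\<^sub>R a + \<tau> *\<^sub>R b)"
    using \<open>s + t > 0\<close> by (simp add: sgn_scaleR)
  then show ?thesis
    using \<tau> unfolding sarc_eq_sgn by blast
qed

lemma HWulffD: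
  assumes W: "W \<in> HWulff P"
  shows "cone_section P W" "\<And>w. w \<in> W \<Longrightarrow> 0 < P \<bullet> w" "sinterior_point W P"
proof -
  have sph: "W \<subseteq> sph" and "closed W" and int: "sinterior_point W P"
    and sarc: "\<And>a b. a \<in> W \<Longrightarrow> b \<in> W \<Longrightarrow> sarc a b \<subseteq> W"
    using W by (auto simp: HWulff_def Hsets_def spherical_convex_body_def spherical_convex_def)
  show pos: "0 < P \<bullet> w" if "w \<in> W" for w
    using W sph that by (auto simp: HWulff_def hemi_def)
  show "sinterior_point W P" by (rule int)
  show "cone_section P W"
    unfolding cone_section_def
  proof (intro conjI ballI allI impI)
    show "closed W" "P \<in> W"
      using \<open>closed W\<close> int by (auto simp: sinterior_point_def)
    show "W \<subseteq> hemi P"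
      using sph pos by (auto simp: hemi_def less_imp_le)
    fix a b and s t :: real
    assume "a \<in> W" "b \<in> W" "0 \<le> s" "0 \<le> t" "s *\<^sub>R a + t *\<^sub>R b \<noteq> 0"
    then show "sgn (s *\<^sub>R a + t *\<^sub>R b) \<in> W"
      using sgn_combination_in_sarc sarc by blast
  qed
qed

lemma sarc_subset_cone_section:
  assumes W: "cone_section P W" and pos: "\<And>w. w \<in> W \<Longrightarrow> 0 < P \<bullet> w" and ab: "a \<in> W" "b \<in> W"
  shows "sarc a b \<subseteq> W"
proof
  fix x assume "x \<in> sarc a b"
  then obtain t where t: "0 \<le> t" "t \<le> 1" "x = sgn ((1 - t) *\<^sub>R a + t *\<^sub>R b)"
    unfolding sarc_eq_sgn by blast
  have "0 < (1 - t) * (P \<bullet> a) + t * (P \<bullet> b)"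
    using pos[OF ab(1)] pos[OF ab(2)] t
    by (cases "t = 0") (auto intro: add_nonneg_pos mult_pos_pos)
  then have "0 < P \<bullet> ((1 - t) *\<^sub>R a + t *\<^sub>R b)"
    by (simp add: inner_add_right)
  then have "(1 - t) *\<^sub>R a + t *\<^sub>R b \<noteq> 0"
    by auto
  then show "x \<in> W"
    using cone_section_sgn[OF W ab] t by simp
qed

lemma HWulffI:
  assumes W: "cone_section P W" and pos: "\<And>w. w \<in> W \<Longrightarrow> 0 < P \<bullet> w" and int: "sinterior_point W P"
  shows "W \<in> HWulff P"
proof -
  have sph: "W \<subseteq> sph" and "closed W" and "P \<in> W"
    using W cone_section_subset_sph[OF W] by (auto simp: cone_section_def)
  moreover have "W \<inter> hemi (- P) = {}"
    using pos by (force simp: hemi_def)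
  moreover have "-P \<in> sph"
    using sph \<open>P \<in> W\<close> by (auto simp: sph_iff)
  ultimately show ?thesis
    using int sarc_subset_cone_section[OF W pos]
    unfolding HWulff_def Hsets_def spherical_convex_body_def spherical_convex_def hemispherical_def
    by blast
qed

text \<open>If the polar contained a point \<open>y\<close> orthogonal to \<open>P\<close>, then \<open>W\<close> would contain the nearby points
  \<open>cos \<theta> P - sin \<theta> y\<close>, which have negative inner product with \<open>y\<close>.\<close>
lemma inner_pos_spolar:
  assumes int: "sinterior_point W P" and P: "P \<in> sph" and y: "y \<in> spolar W"
  shows "0 < P \<bullet> y"
proof -
  obtain e where "e > 0" and ball: "sph \<inter> ball P e \<subseteq> W"
    using int by (auto simp: sinterior_point_def)
  have "P \<in> W" using int by (simp add: sinterior_point_def)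
  then have "0 \<le> P \<bullet> y" using y by (simp add: spolar_def)
  moreover have "P \<bullet> y \<noteq> 0"
  proof
    assume Py: "P \<bullet> y = 0"
    define \<theta> where "\<theta> = min (e / 2) (pi / 2)"
    have \<theta>: "0 < \<theta>" "\<theta> < e" "\<theta> \<le> pi / 2" using \<open>e > 0\<close> by (auto simp: \<theta>_def)
    define z where "z = cos \<theta> *\<^sub>R P - sin \<theta> *\<^sub>R y"
    have PP: "P \<bullet> P = 1" and yy: "y \<bullet> y = 1"
      using P y by (simp_all add: spolar_def sph_iff norm_eq_1)
    have "z \<bullet> z = (cos \<theta>)\<^sup>2 + (sin \<theta>)\<^sup>2"
      by (simp add: z_def inner_diff_left inner_diff_right PP yy Py inner_commute[of y P] power2_eq_square)
    then have z: "z \<in> sph" by (simp add: sph_iff norm_eq_1)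
    have "sdist P z = \<theta>"
      using \<theta> by (simp add: sdist_def z_def inner_diff_right PP Py arccos_cos)
    then have "dist P z < e"
      using norm_diff_le_sdist[OF P z] \<theta> by (simp add: dist_norm)
    then have "z \<in> W" using ball z by auto
    then have "0 \<le> z \<bullet> y" using y by (simp add: spolar_def)
    moreover have "z \<bullet> y = - sin \<theta>"
      by (simp add: z_def inner_diff_left Py yy)
    moreover have "sin \<theta> > 0"
      using \<theta> by (intro sin_gt_zero) auto
    ultimately show False by simp
  qed
  ultimately show ?thesis by simp
qed

lemma sinterior_point_spolar:
  assumes P: "P \<in> sph" and W: "compact W" "W \<noteq> {}" "W \<subseteq> sph"
    and pos: "\<And>w. w \<in> W \<Longrightarrow> 0 < P \<bullet> w"
  shows "sinterior_point (spolar W) P"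
proof -
  obtain w0 where w0: "w0 \<in> W" and min: "\<And>w. w \<in> W \<Longrightarrow> P \<bullet> w0 \<le> P \<bullet> w"
    using continuous_attains_inf[OF W(1,2), of "\<lambda>w. P \<bullet> w"] continuous_on_inner[OF continuous_on_const continuous_on_id]
    by blast
  define m where "m = P \<bullet> w0"
  have "m > 0" using pos[OF w0] by (simp add: m_def)
  have "sph \<inter> ball P m \<subseteq> spolar W"
  proof
    fix y assume y: "y \<in> sph \<inter> ball P m"
    have "0 \<le> w \<bullet> y" if w: "w \<in> W" for w
    proof -
      have "\<bar>w \<bullet> (y - P)\<bar> \<le> norm (y - P)"
        using w W(3) abs_inner_sph_le_norm by blast
      moreover have "norm (y - P) < m"
        using y by (simp add: dist_norm norm_minus_commute)
      moreover have "m \<le> w \<bullet> P"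
        using min[OF w] by (simp add: m_def inner_commute)
      ultimately show ?thesis by (simp add: inner_diff_right)
    qed
    then show "y \<in> spolar W" using y by (simp add: spolar_def)
  qed
  moreover have "P \<in> spolar W"
    using P pos by (auto simp: spolar_def inner_commute less_imp_le)
  ultimately show ?thesis
    using \<open>m > 0\<close> by (auto simp: sinterior_point_def)
qed

lemma HWulff_spolar:
  assumes W: "W \<in> HWulff P"
  shows "spolar W \<in> HWulff P"
proof (rule HWulffI)
  note cs = HWulffD(1)[OF W]
  have "P \<in> W" "W \<subseteq> sph"
    using cs cone_section_subset_sph[OF cs] by (auto simp: cone_section_def)
  then have "P \<in> sph" by blast
  show "cone_section P (spolar W)"
    by (rule cone_section_spolar[OF cs])
  show "0 < P \<bullet> y" if "y \<in> spolar W" for y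
    by (rule inner_pos_spolar[OF HWulffD(3)[OF W] \<open>P \<in> sph\<close> that])
  show "sinterior_point (spolar W) P"
    using \<open>P \<in> W\<close> \<open>W \<subseteq> sph\<close> HWulffD(2)[OF W]
    by (intro sinterior_point_spolar[OF \<open>P \<in> sph\<close> compact_cone_section[OF cs]]) auto
qed

section \<open>Approximation by Wulff shapes\<close>

lemma infdist_scaleR_le:
  fixes K :: "'a::euclidean_space set"
  assumes K: "conic K" "closed K" "K \<noteq> {}" and "0 \<le> c"
  shows "infdist (c *\<^sub>R x) K \<le> c * infdist x K"
proof -
  obtain k where k: "k \<in> K" "infdist x K = dist x k"
    using infdist_attains_inf[OF K(2,3)] by blast
  have "infdist (c *\<^sub>R x) K \<le> dist (c *\<^sub>R x) (c *\<^sub>R k)"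
    using conic_mul[OF K(1) k(1) \<open>0 \<le> c\<close>] by (rule infdist_le)
  also have "\<dots> = c * infdist x K"
    using \<open>0 \<le> c\<close> k(2) by (simp add: dist_norm flip: scaleR_diff_right)
  finally show ?thesis .
qed

lemma infdist_add_le:
  fixes K :: "'a::euclidean_space set"
  assumes K: "convex_cone K" "closed K"
  shows "infdist (x + y) K \<le> infdist x K + infdist y K"
proof -
  obtain k l where k: "k \<in> K" "infdist x K = dist x k" and l: "l \<in> K" "infdist y K = dist y l"
    using infdist_attains_inf[OF K(2) convex_cone_nonempty[OF K(1)]] by metis
  have "infdist (x + y) K \<le> dist (x + y) (k + l)"
    using convex_cone_add[OF K(1) k(1) l(1)] by (rule infdist_le)
  also have "\<dots> \<le> dist x k + dist y l"
    by (rule dist_triangle_add)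
  finally show ?thesis using k(2) l(2) by simp
qed

text \<open>For \<open>0 < \<beta> < 1\<close> the trace of this cone on the sphere is within chordal distance \<open>2\<beta>\<close> of that
  of \<open>K\<close>; the second condition keeps it away from the boundary of \<open>H(P)\<close>.\<close>
definition thickened_cone :: "'a::euclidean_space \<Rightarrow> real \<Rightarrow> 'a set \<Rightarrow> 'a set" where
  "thickened_cone P \<beta> K = {x. infdist x K \<le> \<beta> * (P \<bullet> x) \<and> \<beta> * norm x \<le> 2 * (P \<bullet> x)}"

lemma closed_thickened_cone: "closed (thickened_cone P \<beta> K)"
  unfolding thickened_cone_def Collect_conj_eq
  by (intro closed_Int closed_Collect_le continuous_intros)

lemma convex_cone_thickened_cone:
  assumes K: "convex_cone K" "closed K" and "0 \<le> \<beta>"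
  shows "convex_cone (thickened_cone P \<beta> K)"
  unfolding convex_cone_iff
proof (intro conjI ballI allI impI)
  show "0 \<in> thickened_cone P \<beta> K"
    using convex_cone_contains_0[OF K(1)] by (simp add: thickened_cone_def)
  fix x assume x: "x \<in> thickened_cone P \<beta> K"
  have conic: "conic K" using K(1) by (simp add: convex_cone_def)
  show "c *\<^sub>R x \<in> thickened_cone P \<beta> K" if "0 \<le> c" for c :: real
  proof -
    have "infdist (c *\<^sub>R x) K \<le> c * (\<beta> * (P \<bullet> x))"
      using infdist_scaleR_le[OF conic K(2) convex_cone_nonempty[OF K(1)] that, of x]
        mult_left_mono[OF _ that, of "infdist x K" "\<beta> * (P \<bullet> x)"] x
      by (simp add: thickened_cone_def)
    moreover have "c * (\<beta> * norm x) \<le> c * (2 * (P \<bullet> x))"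
      using x that by (intro mult_left_mono) (simp_all add: thickened_cone_def)
    ultimately show ?thesis
      using that by (simp add: thickened_cone_def algebra_simps)
  qed
  fix y assume y: "y \<in> thickened_cone P \<beta> K"
  have "infdist (x + y) K \<le> \<beta> * (P \<bullet> (x + y))"
    using infdist_add_le[OF K, of x y] x y by (simp add: thickened_cone_def inner_add_right algebra_simps)
  moreover have "\<beta> * norm (x + y) \<le> \<beta> * (norm x + norm y)"
    using \<open>0 \<le> \<beta>\<close> by (intro mult_left_mono norm_triangle_ineq)
  ultimately show "x + y \<in> thickened_cone P \<beta> K"
    using x y by (simp add: thickened_cone_def inner_add_right algebra_simps)
qed

lemma sph_Int_ball_subset_thickened_cone:
  assumes P: "P \<in> sph" "P \<in> K" and \<beta>: "0 < \<beta>" "\<beta> \<le> 1"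
  shows "sph \<inter> ball P (min 1 (\<beta> / 2)) \<subseteq> sph \<inter> thickened_cone P \<beta> K"
proof
  fix v assume v: "v \<in> sph \<inter> ball P (min 1 (\<beta> / 2))"
  then have vs: "v \<in> sph" and nd: "norm (P - v) < min 1 (\<beta> / 2)" by (auto simp: dist_norm)
  have "(norm (P - v))\<^sup>2 \<le> norm (P - v)"
    using nd by (simp add: power2_eq_square mult_left_le)
  then have Pv: "1 / 2 \<le> P \<bullet> v"
    using norm_diff_sph_squared[OF P(1) vs] nd by simp
  have "infdist v K \<le> dist v P" by (rule infdist_le[OF P(2)])
  also have "\<dots> < \<beta> / 2" using nd by (simp add: dist_norm norm_minus_commute)
  also have "\<beta> / 2 \<le> \<beta> * (P \<bullet> v)" using mult_left_mono[OF Pv, of \<beta>] \<beta> by simp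
  finally show "v \<in> sph \<inter> thickened_cone P \<beta> K"
    using vs Pv \<beta> by (simp add: thickened_cone_def sph_iff)
qed

lemma HWulff_thickened_cone:
  assumes W: "cone_section P W" and \<beta>: "0 < \<beta>" "\<beta> \<le> 1"
  shows "sph \<inter> thickened_cone P \<beta> (conic hull W) \<in> HWulff P"
proof -
  let ?K = "conic hull W" and ?V = "sph \<inter> thickened_cone P \<beta> (conic hull W)"
  have P: "P \<in> sph" "P \<in> W"
    using W cone_section_subset_sph[OF W] by (auto simp: cone_section_def)
  have PK: "P \<in> ?K" by (rule hull_inc[OF P(2)])
  have cs: "cone_section P ?V"
  proof (rule cone_section_sph_Int)
    show "convex_cone (thickened_cone P \<beta> ?K)"
      using convex_cone_conic_hull_cone_section[OF W] closed_conic_hull_cone_section[OF W] \<beta>(1)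
      by (intro convex_cone_thickened_cone) simp_all
    show "closed (thickened_cone P \<beta> ?K)"
      by (rule closed_thickened_cone)
    show "P \<in> thickened_cone P \<beta> ?K"
      using sph_Int_ball_subset_thickened_cone[OF P(1) PK \<beta>] P(1) \<beta> by auto
    show "0 \<le> P \<bullet> x" if "x \<in> thickened_cone P \<beta> ?K" for x
    proof -
      have "0 \<le> \<beta> * norm x" using \<beta> by simp
      then show ?thesis using that by (simp add: thickened_cone_def)
    qed
  qed (rule P(1))
  have pos: "0 < P \<bullet> v" if "v \<in> ?V" for v
    using that \<beta> by (auto simp: thickened_cone_def sph_iff)
  have "sph \<inter> ball P (min 1 (\<beta> / 2)) \<subseteq> ?V"
    using sph_Int_ball_subset_thickened_cone[OF P(1) PK \<beta>] .
  moreover have "min 1 (\<beta> / 2) > 0" using \<beta> by simp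
  moreover have "P \<in> ?V" using cs unfolding cone_section_def by blast
  ultimately have "sinterior_point ?V P"
    unfolding sinterior_point_def by blast
  with cs pos show ?thesis
    by (rule HWulffI)
qed

lemma thickened_cone_near_cone_section:
  assumes W: "cone_section P W" and \<beta>: "0 < \<beta>" "\<beta> \<le> 1" and w: "w \<in> W"
  shows "\<exists>v\<in>sph \<inter> thickened_cone P \<beta> (conic hull W). dist w v \<le> 2 * \<beta>"
proof -
  let ?K = "conic hull W"
  have K: "convex_cone ?K" by (rule convex_cone_conic_hull_cone_section[OF W])
  have P: "P \<in> sph" "P \<in> W"
    using W cone_section_subset_sph[OF W] by (auto simp: cone_section_def)
  have nw: "norm w = 1" using w cone_section_subset_sph[OF W] by (auto simp: sph_iff)
  define u where "u = w + \<beta> *\<^sub>R P"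
  have "u \<in> ?K"
    unfolding u_def using K hull_inc[OF w] hull_inc[OF P(2)] \<beta>(1)
    by (simp add: convex_cone_add convex_cone_scaleR)
  have "\<beta> \<le> P \<bullet> u"
    using cone_section_inner_nonneg[OF W w] P(1) by (simp add: u_def inner_add_right sph_iff norm_eq_1)
  moreover have "norm u \<le> 1 + \<beta>"
    using norm_triangle_ineq[of w "\<beta> *\<^sub>R P"] nw P(1) \<beta>(1) by (simp add: u_def sph_iff)
  moreover have "\<beta> * (1 + \<beta>) \<le> 2 * \<beta>"
    using \<beta> by (simp add: algebra_simps)
  ultimately have "\<beta> * norm u \<le> 2 * (P \<bullet> u)"
    using mult_left_mono[of "norm u" "1 + \<beta>" \<beta>] \<beta>(1) by linarith
  then have "u \<in> thickened_cone P \<beta> ?K"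
    using \<open>u \<in> ?K\<close> \<open>\<beta> \<le> P \<bullet> u\<close> \<beta>(1) by (simp add: thickened_cone_def)
  moreover have "u \<noteq> 0" using \<open>\<beta> \<le> P \<bullet> u\<close> \<beta>(1) by auto
  ultimately have "sgn u \<in> sph \<inter> thickened_cone P \<beta> ?K"
    using convex_cone_thickened_cone[OF K closed_conic_hull_cone_section[OF W], of \<beta> P] \<beta>(1)
    by (simp add: sgn_div_norm convex_cone_scaleR sgn_in_sph[unfolded sgn_div_norm])
  moreover have "dist w (sgn u) \<le> 2 * \<beta>"
  proof -
    have "dist w (sgn u) = norm (sgn w - sgn u)"
      using nw by (simp add: dist_norm sgn_div_norm)
    also have "\<dots> \<le> 2 * norm (w - u) / norm w"
      using nw by (intro norm_sgn_diff_le) auto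
    also have "\<dots> = 2 * \<beta>"
      using nw P(1) \<beta>(1) by (simp add: u_def sph_iff)
    finally show ?thesis .
  qed
  ultimately show ?thesis by blast
qed

lemma cone_section_near_thickened_cone:
  assumes W: "cone_section P W" and \<beta>: "0 < \<beta>" "\<beta> < 1"
    and v: "v \<in> sph \<inter> thickened_cone P \<beta> (conic hull W)"
  shows "\<exists>w\<in>W. dist v w \<le> 2 * \<beta>"
proof -
  let ?K = "conic hull W"
  have P: "P \<in> sph" using W cone_section_subset_sph[OF W] by (auto simp: cone_section_def)
  have nv: "norm v = 1" using v by (simp add: sph_iff)
  obtain k where k: "k \<in> ?K" "infdist v ?K = dist v k"
    using infdist_attains_inf[OF closed_conic_hull_cone_section[OF W]]
      convex_cone_nonempty[OF convex_cone_conic_hull_cone_section[OF W]] by blast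
  have "P \<bullet> v \<le> 1"
    using abs_inner_sph_le_1[OF P] v by force
  then have "\<beta> * (P \<bullet> v) \<le> \<beta>"
    using \<beta>(1) by (simp add: mult_left_le)
  then have "dist v k \<le> \<beta>"
    using v k(2) by (simp add: thickened_cone_def)
  obtain c w where cw: "k = c *\<^sub>R w" "0 \<le> c" "w \<in> W"
    using k(1) by (auto simp: conic_hull_explicit)
  have nw: "norm w = 1" using cw(3) cone_section_subset_sph[OF W] by (auto simp: sph_iff)
  have "c \<noteq> 0"
  proof
    assume "c = 0"
    then have "dist v k = 1" using cw(1) nv by simp
    then show False using \<open>dist v k \<le> \<beta>\<close> \<beta>(2) by simp
  qed
  then have "sgn k = w" using cw nw by (simp add: sgn_scaleR sgn_div_norm)
  have "dist v w = norm (sgn v - sgn k)"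
    using nv \<open>sgn k = w\<close> by (simp add: dist_norm sgn_div_norm)
  also have "\<dots> \<le> 2 * norm (v - k) / norm v"
    using nv by (intro norm_sgn_diff_le) auto
  also have "\<dots> \<le> 2 * \<beta>"
    using \<open>dist v k \<le> \<beta>\<close> nv by (simp add: dist_norm)
  finally show ?thesis using cw(3) by blast
qed

lemma cone_section_in_HWulff_cl:
  assumes W: "cone_section P W"
  shows "W \<in> HWulff_cl P"
  unfolding HWulff_cl_iff_close
proof (intro conjI allI impI)
  show "W \<in> Hsets"
    using W cone_section_subset_sph[OF W] by (auto simp: Hsets_def cone_section_def)
  fix d :: real assume "d > 0"
  define \<beta> where "\<beta> = min (1 / 2) (d / 4)"
  have \<beta>: "0 < \<beta>" "\<beta> < 1" "2 * \<beta> < d" using \<open>d > 0\<close> by (auto simp: \<beta>_def)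
  let ?V = "sph \<inter> thickened_cone P \<beta> (conic hull W)"
  have "?V \<in> HWulff P"
    using HWulff_thickened_cone[OF W] \<beta> by simp
  moreover have "\<exists>y\<in>?V. dist x y < d" if x: "x \<in> W" for x
  proof -
    obtain y where "y \<in> ?V" "dist x y \<le> 2 * \<beta>"
      using thickened_cone_near_cone_section[OF W \<beta>(1) less_imp_le[OF \<beta>(2)] x] by blast
    then show ?thesis using \<beta>(3) by force
  qed
  moreover have "\<exists>x\<in>W. dist y x < d" if y: "y \<in> ?V" for y
  proof -
    obtain x where "x \<in> W" "dist y x \<le> 2 * \<beta>"
      using cone_section_near_thickened_cone[OF W \<beta>(1,2) y] by blast
    then show ?thesis using \<beta>(3) by force
  qed
  ultimately show "\<exists>V\<in>HWulff P. (\<forall>x\<in>W. \<exists>y\<in>V. dist x y < d) \<and> (\<forall>y\<in>V. \<exists>x\<in>W. dist y x < d)"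
    by blast
qed

lemma HWulff_cl_eq: "HWulff_cl P = {W. cone_section P W}"
proof (intro equalityI subsetI CollectI)
  fix W assume W: "W \<in> HWulff_cl P"
  then have "closed W" "W \<subseteq> sph" by (auto simp: HWulff_cl_def Hsets_def)
  then show "cone_section P W"
  proof (rule cone_section_limit)
    fix d :: real assume "d > 0"
    then obtain V where "V \<in> HWulff P" "\<forall>x\<in>W. \<exists>y\<in>V. dist x y < d" "\<forall>y\<in>V. \<exists>x\<in>W. dist y x < d"
      using W unfolding HWulff_cl_iff_close by blast
    then show "\<exists>V. cone_section P V \<and> (\<forall>x\<in>W. \<exists>y\<in>V. dist x y < d) \<and> (\<forall>y\<in>V. \<exists>x\<in>W. dist y x < d)"
      using HWulffD(1) by blast
  qed
qed (simp add: cone_section_in_HWulff_cl)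

lemma HWulff_cl_subset_Hcirc: "HWulff_cl P \<subseteq> Hcirc"
proof
  fix W assume W: "W \<in> HWulff_cl P"
  then have "cone_section P (spolar W)"
    using cone_section_spolar by (simp add: HWulff_cl_eq)
  then have "P \<in> spolar W"
    by (simp add: cone_section_def)
  then show "W \<in> Hcirc"
    using W by (auto simp: Hcirc_def HWulff_cl_def)
qed

lemma involution_on_image_inj_on:
  assumes "\<And>x. x \<in> S \<Longrightarrow> f x \<in> S" and "\<And>x. x \<in> S \<Longrightarrow> f (f x) = x"
  shows "f ` S = S" and "inj_on f S"
  using assms by (force intro: image_eqI, metis inj_onI)

theorem proposition2:
  fixes P :: "'a::euclidean_space"
  assumes "DIM('a) \<ge> 2"
    and "P \<in> sph"
  shows "HWulff_cl P \<subseteq> Hcirc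
     \<and> spolar ` HWulff P = HWulff P
     \<and> spolar ` HWulff_cl P = HWulff_cl P
     \<and> inj_on spolar (HWulff_cl P)"
proof -
  have HWulff_bipolar: "spolar (spolar W) = W" if "W \<in> HWulff P" for W
    by (rule spolar_spolar[OF HWulffD(1)[OF that]])
  have cl_spolar: "spolar W \<in> HWulff_cl P" if "W \<in> HWulff_cl P" for W
    using that cone_section_spolar by (simp add: HWulff_cl_eq)
  have cl_bipolar: "spolar (spolar W) = W" if "W \<in> HWulff_cl P" for W
    using that spolar_spolar by (simp add: HWulff_cl_eq)
  have "spolar ` HWulff P = HWulff P"
    by (rule involution_on_image_inj_on(1)[OF HWulff_spolar HWulff_bipolar])
  moreover have "spolar ` HWulff_cl P = HWulff_cl P" "inj_on spolar (HWulff_cl P)"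
    using involution_on_image_inj_on[OF cl_spolar cl_bipolar] by blast+
  ultimately show ?thesis
    using HWulff_cl_subset_Hcirc by blast
qed

end
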